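(* Let $n\ge1$ and $q>0$. Consider the partially asymmetric exclusion process (PASEP) on $n$ sites numbered $1,\dots,n$ from right to left: a continuous-time Markov chain on subsets of occupied sites where, for $2\le s\le n$, a particle at site $s$ moves to an empty site $s-1$ (hop right) at rate $1$, a particle at site $s-1$ moves to an empty site $s$ (hop left) at rate $q$, a particle enters at site $n$ when it is empty at rate $1$, and a particle at site $1$ exits at rate $1$. For a composition $I$ of $n+1$ let \[ N_I(q)=\sum_{J\succeq I}\left(-\tfrac1q\right)^{\ell(I)-\ell(J)}q^{-\mathrm{st}'(I,J)}\mathrm{QFact}_A(J), \] and let $Z_n=\sum_{I'}N_{I'}(q)$ over all compositions $I'$ of $n+1$ (the partition function). Let $\tau$ be the state in which exactly the sites in $\mathrm{Des}(I)$ are occupied and all sites of $\{1,\dots,n\}\setminus\mathrm{Des}(I)$ are empty. Then the steady-state probability of $\tau$ equals $N_I(q)/Z_n$.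
   Context: A composition of $m$ is a sequence $I=(i_1,\dots,i_r)$ of positive integers with sum $m$; $\ell(I)=r$; $\mathrm{Des}(I)=\{i_1,i_1+i_2,\dots,i_1+\dots+i_{r-1}\}$; $J\succeq I$ ($J$ coarser than $I$) means $\mathrm{Des}(J)\subseteq\mathrm{Des}(I)$. For $I\preceq J$, $\mathrm{st}'(I,J)=\#\{(a,b)\in\mathrm{Des}(I)\times\mathrm{Des}(J):a\le b\}$. $[m]_q=1+q+\dots+q^{m-1}$ and $\mathrm{QFact}_A(j_1,\dots,j_p)=[p]_q^{j_1}[p-1]_q^{j_2}\cdots[1]_q^{j_p}$. *)

theory Defs
  imports Complex_Main
begin

definition compositions :: "nat \<Rightarrow> nat list set" where
  "compositions m = {I. (\<forall>x\<in>set I. 0 < x) \<and> sum_list I = m}"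

definition Des :: "nat list \<Rightarrow> nat set" where
  "Des I = {sum_list (take k I) | k. 1 \<le> k \<and> k < length I}"

definition st' :: "nat list \<Rightarrow> nat list \<Rightarrow> nat" where
  "st' I J = card {(a, b). a \<in> Des I \<and> b \<in> Des J \<and> a \<le> b}"

definition qint :: "nat \<Rightarrow> real \<Rightarrow> real" where
  "qint m q = (\<Sum>i<m. q ^ i)"

definition QFactA :: "real \<Rightarrow> nat list \<Rightarrow> real" where
  "QFactA q J = (\<Prod>k<length J. qint (length J - k) q ^ (J ! k))"

text \<open>N_I(q) for a composition I of m, summing over coarser compositions J of m.\<close>
definition N_I :: "real \<Rightarrow> nat \<Rightarrow> nat list \<Rightarrow> real" where
  "N_I q m I = (\<Sum>J\<in>{J \<in> compositions m. Des J \<subseteq> Des I}.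
      (- 1 / q) ^ (length I - length J) * inverse (q ^ st' I J) * QFactA q J)"

definition Z_n :: "real \<Rightarrow> nat \<Rightarrow> real" where
  "Z_n q n = (\<Sum>I'\<in>compositions (n + 1). N_I q (n + 1) I')"

text \<open>PASEP on sites 1..n (numbered right to left); states = sets of occupied sites.
  Transition rate from state S to state T.\<close>
definition pasep_rate :: "nat \<Rightarrow> real \<Rightarrow> nat set \<Rightarrow> nat set \<Rightarrow> real" where
  "pasep_rate n q S T =
     (\<Sum>s\<in>{2..n}. if s \<in> S \<and> s - 1 \<notin> S \<and> T = insert (s - 1) (S - {s}) then 1 else 0)
   + (\<Sum>s\<in>{2..n}. if s - 1 \<in> S \<and> s \<notin> S \<and> T = insert s (S - {s - 1}) then q else 0)
   + (if n \<notin> S \<and> T = insert n S then 1 else 0)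
   + (if 1 \<in> S \<and> T = S - {1} then 1 else 0)"

definition pasep_states :: "nat \<Rightarrow> nat set set" where
  "pasep_states n = Pow {1..n}"

definition pasep_stationary :: "nat \<Rightarrow> real \<Rightarrow> (nat set \<Rightarrow> real) \<Rightarrow> bool" where
  "pasep_stationary n q \<pi> \<longleftrightarrow>
     (\<forall>S\<in>pasep_states n. 0 \<le> \<pi> S) \<and>
     (\<Sum>S\<in>pasep_states n. \<pi> S) = 1 \<and>
     (\<forall>T\<in>pasep_states n.
        (\<Sum>S\<in>pasep_states n - {T}. \<pi> S * pasep_rate n q S T)
        = \<pi> T * (\<Sum>S\<in>pasep_states n - {T}. pasep_rate n q T S))"

end

theory Submission
  imports Defs
begin

text \<open>Attach to each state the weight of its occupancy word in the algebra of Derrida, Evans,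
  Hakim and Pasquier, \<open>DE = qED + D + E\<close> with boundary relations \<open>\<langle>W|E = \<langle>W|\<close> and
  \<open>D|V\<rangle> = |V\<rangle>\<close>, realised concretely by a recursion on words. These relations make the
  net flow across every bond and boundary a difference of consecutive terms, so the global balance
  equations telescope and the weights form an unnormalised stationary measure. The chain is
  irreducible, so by a maximum principle every solution of global balance is a multiple of the
  stationary distribution \<open>\<pi>\<close>, which is therefore the normalised weight. Finally, expanding
  \<open>N_I(q)\<close> along its topmost site reproduces the recursion of the weights, and \<open>Des\<close> is a
  bijection from compositions of \<open>n + 1\<close> onto the states, which identifies \<open>Z_n\<close> with the
  total weight.\<close>

section \<open>Stationary measures of irreducible finite chains\<close>

definition global_balance :: "'a set \<Rightarrow> ('a \<Rightarrow> 'a \<Rightarrow> real) \<Rightarrow> ('a \<Rightarrow> real) \<Rightarrow> bool" where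
  "global_balance X r w \<longleftrightarrow>
     (\<forall>T\<in>X. (\<Sum>S\<in>X - {T}. w S * r S T) = w T * (\<Sum>S\<in>X - {T}. r T S))"

definition transitions :: "'a set \<Rightarrow> ('a \<Rightarrow> 'a \<Rightarrow> real) \<Rightarrow> 'a rel" where
  "transitions X r = {(S, T). S \<in> X \<and> T \<in> X \<and> S \<noteq> T \<and> 0 < r S T}"

definition irreducible :: "'a set \<Rightarrow> ('a \<Rightarrow> 'a \<Rightarrow> real) \<Rightarrow> bool" where
  "irreducible X r \<longleftrightarrow> (\<forall>S\<in>X. \<forall>T\<in>X. (S, T) \<in> (transitions X r)\<^sup>*)"

lemma irreducible_predecessor_closed:
  assumes "irreducible X r" and "Z \<subseteq> X" and "Z \<noteq> {}"
    and closed: "\<And>S T. (S, T) \<in> transitions X r \<Longrightarrow> T \<in> Z \<Longrightarrow> S \<in> Z"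
  shows "Z = X"
proof -
  obtain T where T: "T \<in> Z" using \<open>Z \<noteq> {}\<close> by blast
  have "S \<in> Z" if "S \<in> X" for S
  proof -
    have "(S, T) \<in> (transitions X r)\<^sup>*"
      using assms(1,2) T that unfolding irreducible_def by blast
    then show ?thesis
      using T by (induction rule: converse_rtrancl_induct) (auto intro: closed)
  qed
  then show ?thesis using \<open>Z \<subseteq> X\<close> by blast
qed

lemma global_balance_pos:
  assumes "finite X" and "irreducible X r" and r: "\<And>S T. 0 \<le> r S T"
    and bal: "global_balance X r \<pi>" and \<pi>: "\<forall>S\<in>X. 0 \<le> \<pi> S" and "(\<Sum>S\<in>X. \<pi> S) \<noteq> 0"
    and "S \<in> X"
  shows "0 < \<pi> S"
proof -
  define Z where "Z = {S \<in> X. \<pi> S = 0}"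
  have "Z \<noteq> X"
  proof
    assume "Z = X"
    then have "(\<Sum>S\<in>X. \<pi> S) = 0" unfolding Z_def by (intro sum.neutral) blast
    then show False using \<open>(\<Sum>S\<in>X. \<pi> S) \<noteq> 0\<close> by contradiction
  qed
  moreover have "S \<in> Z" if "(S, T) \<in> transitions X r" and "T \<in> Z" for S T
  proof -
    have "(\<Sum>S\<in>X - {T}. \<pi> S * r S T) = 0"
      using bal \<open>T \<in> Z\<close> unfolding global_balance_def Z_def by simp
    moreover have "\<forall>S\<in>X - {T}. 0 \<le> \<pi> S * r S T" using \<pi> r by simp
    ultimately have "\<forall>S\<in>X - {T}. \<pi> S * r S T = 0"
      using \<open>finite X\<close> sum_nonneg_eq_0_iff[of "X - {T}" "\<lambda>S. \<pi> S * r S T"] by blast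
    moreover have "S \<in> X - {T}" and "r S T \<noteq> 0" using that(1) unfolding transitions_def by auto
    ultimately show ?thesis using that(1) unfolding transitions_def Z_def by auto
  qed
  ultimately have "Z = {}"
    using irreducible_predecessor_closed[OF \<open>irreducible X r\<close>, of Z] unfolding Z_def by auto
  then show ?thesis using \<pi> \<open>S \<in> X\<close> unfolding Z_def by force
qed

text \<open>Maximum principle: the set where \<open>w / \<pi>\<close> is maximal is closed under predecessors.\<close>
lemma global_balance_proportional:
  assumes "finite X" and "irreducible X r" and r: "\<And>S T. 0 \<le> r S T"
    and bal\<pi>: "global_balance X r \<pi>" and \<pi>: "\<forall>S\<in>X. 0 < \<pi> S" and balw: "global_balance X r w"
  shows "\<exists>c. \<forall>S\<in>X. w S = c * \<pi> S"
proof (cases "X = {}")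
  case False
  define f where "f S = w S / \<pi> S" for S
  have w: "w S = f S * \<pi> S" if "S \<in> X" for S
    using \<pi> that unfolding f_def by (simp add: less_imp_neq[symmetric])
  define M where "M = Max (f ` X)"
  have fM: "f S \<le> M" if "S \<in> X" for S
    unfolding M_def using \<open>finite X\<close> that by simp
  define Z where "Z = {S \<in> X. f S = M}"
  have "M \<in> f ` X" unfolding M_def using \<open>finite X\<close> False by simp
  then have "Z \<noteq> {}" unfolding Z_def by auto
  moreover have "S \<in> Z" if S: "(S, T) \<in> transitions X r" and "T \<in> Z" for S T
  proof -
    have T: "T \<in> X" "f T = M" using \<open>T \<in> Z\<close> unfolding Z_def by auto
    have "(\<Sum>S\<in>X - {T}. \<pi> S * r S T * (M - f S))
        = M * (\<Sum>S\<in>X - {T}. \<pi> S * r S T) - (\<Sum>S\<in>X - {T}. w S * r S T)"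
      by (simp add: sum_subtractf sum_distrib_left algebra_simps w)
    also have "\<dots> = 0"
      using bal\<pi> balw T unfolding global_balance_def by (simp add: w)
    finally have "(\<Sum>S\<in>X - {T}. \<pi> S * r S T * (M - f S)) = 0" .
    moreover have "\<forall>S\<in>X - {T}. 0 \<le> \<pi> S * r S T * (M - f S)"
      using \<pi> r fM by (simp add: less_imp_le)
    ultimately have "\<pi> S * r S T * (M - f S) = 0"
      using S \<open>finite X\<close> sum_nonneg_eq_0_iff[of "X - {T}" "\<lambda>S. \<pi> S * r S T * (M - f S)"]
      unfolding transitions_def by blast
    then show ?thesis using S \<pi> unfolding transitions_def Z_def by auto
  qed
  ultimately have "Z = X"
    using irreducible_predecessor_closed[OF \<open>irreducible X r\<close>, of Z] unfolding Z_def by auto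
  then show ?thesis using w unfolding Z_def by auto
qed simp

lemma global_balance_eq_total_mult:
  assumes "finite X" and "irreducible X r" and "\<And>S T. 0 \<le> r S T"
    and "global_balance X r \<pi>" and "\<forall>S\<in>X. 0 \<le> \<pi> S" and "(\<Sum>S\<in>X. \<pi> S) = 1"
    and "global_balance X r w" and "S \<in> X"
  shows "w S = (\<Sum>S\<in>X. w S) * \<pi> S"
proof -
  have "\<forall>S\<in>X. 0 < \<pi> S" using global_balance_pos[OF assms(1-5)] assms(6) by simp
  then obtain c where c: "\<forall>S\<in>X. w S = c * \<pi> S"
    using global_balance_proportional[OF assms(1-4) _ assms(7)] by blast
  then have "(\<Sum>S\<in>X. w S) = c"
    using assms(6) by (simp add: sum_distrib_left[symmetric])
  then show ?thesis using c \<open>S \<in> X\<close> by simp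
qed

section \<open>Irreducibility of the PASEP\<close>

lemma pasep_rate_nonneg: "0 \<le> q \<Longrightarrow> 0 \<le> pasep_rate n q S T"
  unfolding pasep_rate_def by (intro add_nonneg_nonneg sum_nonneg) auto

lemma pasep_rate_hop_right_pos:
  assumes "0 \<le> q" and "2 \<le> s" "s \<le> n" and "s \<in> S" "s - 1 \<notin> S"
  shows "0 < pasep_rate n q S (insert (s - 1) (S - {s}))"
proof -
  let ?hop = "\<lambda>s'. if s' \<in> S \<and> s' - 1 \<notin> S \<and> insert (s - 1) (S - {s}) = insert (s' - 1) (S - {s'})
    then 1 else 0::real"
  have "1 \<le> (\<Sum>s'\<in>{2..n}. ?hop s')"
    using member_le_sum[of s "{2..n}" ?hop] assms by simp
  then show ?thesis
    using \<open>0 \<le> q\<close> unfolding pasep_rate_def by (smt (verit) sum_nonneg)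
qed

lemma pasep_rate_entry_pos: "0 \<le> q \<Longrightarrow> n \<notin> S \<Longrightarrow> 0 < pasep_rate n q S (insert n S)"
  unfolding pasep_rate_def by (smt (verit) sum_nonneg)

lemma pasep_rate_exit_pos: "0 \<le> q \<Longrightarrow> 1 \<in> S \<Longrightarrow> 0 < pasep_rate n q S (S - {1})"
  unfolding pasep_rate_def by (smt (verit) sum_nonneg)

abbreviation pasep_transitions :: "nat \<Rightarrow> real \<Rightarrow> nat set rel" where
  "pasep_transitions n q \<equiv> transitions (pasep_states n) (pasep_rate n q)"

text \<open>Every state empties by exits at site 1 and right hops of its rightmost particle.\<close>
lemma pasep_reaches_empty:
  assumes "0 \<le> q" and "S \<in> pasep_states n"
  shows "(S, {}) \<in> (pasep_transitions n q)\<^sup>*"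
  using assms(2)
proof (induction S rule: measure_induct_rule[where f = "\<lambda>S. \<Sum>S"])
  case (less S)
  have S: "S \<subseteq> {1..n}" using less.prems by (simp add: pasep_states_def)
  then have "finite S" by (rule finite_subset) simp
  have "\<exists>S'. (S, S') \<in> pasep_transitions n q \<and> \<Sum>S' < \<Sum>S" if "S \<noteq> {}"
  proof (cases "1 \<in> S")
    case True
    have "(S, S - {1}) \<in> pasep_transitions n q"
      using S True pasep_rate_exit_pos[OF \<open>0 \<le> q\<close> True]
      unfolding transitions_def pasep_states_def by auto
    moreover have "\<Sum>(S - {1}) < \<Sum>S"
      using \<open>finite S\<close> True by (simp add: sum.remove)
    ultimately show ?thesis by blast
  next
    case False
    define m where "m = Min S"
    have "m \<in> S" using \<open>finite S\<close> \<open>S \<noteq> {}\<close> unfolding m_def by simp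
    have "m \<noteq> 1" "m \<in> {1..n}" using S \<open>m \<in> S\<close> False by auto
    then have "2 \<le> m" "m \<le> n" by auto
    have "m - 1 \<notin> S"
      using Min_le[OF \<open>finite S\<close>] \<open>2 \<le> m\<close> unfolding m_def by fastforce
    have "(S, insert (m - 1) (S - {m})) \<in> pasep_transitions n q"
      using S \<open>2 \<le> m\<close> \<open>m \<le> n\<close> \<open>m \<in> S\<close> \<open>m - 1 \<notin> S\<close>
        pasep_rate_hop_right_pos[OF \<open>0 \<le> q\<close> \<open>2 \<le> m\<close> \<open>m \<le> n\<close> \<open>m \<in> S\<close> \<open>m - 1 \<notin> S\<close>]
      unfolding transitions_def pasep_states_def by auto
    moreover have "\<Sum>(insert (m - 1) (S - {m})) < \<Sum>S"
      using \<open>finite S\<close> \<open>m \<in> S\<close> \<open>m - 1 \<notin> S\<close> \<open>2 \<le> m\<close> by (simp add: sum.remove)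
    ultimately show ?thesis by blast
  qed
  then show ?case
    using less.IH by (cases "S = {}") (auto simp: transitions_def intro: converse_rtrancl_into_rtrancl)
qed

text \<open>Every state is filled from the empty one by entries at site \<open>n\<close> and right hops of the
  leftmost particle.\<close>
lemma pasep_reached_from_empty:
  assumes "0 \<le> q" and "T \<in> pasep_states n"
  shows "({}, T) \<in> (pasep_transitions n q)\<^sup>*"
  using assms(2)
proof (induction T rule: measure_induct_rule[where f = "\<lambda>T. \<Sum>x\<in>T. Suc n - x"])
  case (less T)
  have T: "T \<subseteq> {1..n}" using less.prems by (simp add: pasep_states_def)
  then have "finite T" by (rule finite_subset) simp
  have "\<exists>P. (P, T) \<in> pasep_transitions n q \<and> (\<Sum>x\<in>P. Suc n - x) < (\<Sum>x\<in>T. Suc n - x)"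
    if "T \<noteq> {}"
  proof (cases "n \<in> T")
    case True
    have "(T - {n}, T) \<in> pasep_transitions n q"
      using T True pasep_rate_entry_pos[OF \<open>0 \<le> q\<close>, of n "T - {n}"]
      unfolding transitions_def pasep_states_def by (auto simp: insert_absorb)
    moreover have "(\<Sum>x\<in>T - {n}. Suc n - x) < (\<Sum>x\<in>T. Suc n - x)"
      using \<open>finite T\<close> True by (simp add: sum.remove)
    ultimately show ?thesis by blast
  next
    case False
    define M where "M = Max T"
    have "M \<in> T" using \<open>finite T\<close> \<open>T \<noteq> {}\<close> unfolding M_def by simp
    have "M \<in> {1..n}" "M \<noteq> n" using T \<open>M \<in> T\<close> False by auto
    then have "1 \<le> M" "M < n" by auto
    have "Suc M \<notin> T"
      using Max_ge[OF \<open>finite T\<close>] unfolding M_def by fastforce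
    define P where "P = insert (Suc M) (T - {M})"
    have "T = insert (Suc M - 1) (P - {Suc M})"
      using \<open>M \<in> T\<close> \<open>Suc M \<notin> T\<close> unfolding P_def by auto
    moreover have "0 < pasep_rate n q P (insert (Suc M - 1) (P - {Suc M}))"
      by (rule pasep_rate_hop_right_pos) (use \<open>0 \<le> q\<close> \<open>1 \<le> M\<close> \<open>M < n\<close> in \<open>auto simp: P_def\<close>)
    ultimately have "(P, T) \<in> pasep_transitions n q"
      using T \<open>1 \<le> M\<close> \<open>M < n\<close> \<open>Suc M \<notin> T\<close>
      unfolding transitions_def pasep_states_def P_def by auto
    moreover have "(\<Sum>x\<in>P. Suc n - x) < (\<Sum>x\<in>T. Suc n - x)"
      using \<open>finite T\<close> \<open>M \<in> T\<close> \<open>Suc M \<notin> T\<close> \<open>M < n\<close> by (simp add: P_def sum.remove)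
    ultimately show ?thesis by blast
  qed
  then show ?case
    using less.IH by (cases "T = {}") (auto simp: transitions_def intro: rtrancl_into_rtrancl)
qed

lemma pasep_irreducible: "0 \<le> q \<Longrightarrow> irreducible (pasep_states n) (pasep_rate n q)"
  unfolding irreducible_def
  by (meson pasep_reached_from_empty pasep_reaches_empty rtrancl_trans)

section \<open>The weight algebra\<close>

lemma qint_Suc: "qint (Suc m) q = qint m q + q ^ m"
  by (simp add: qint_def)

lemma qint_Suc': "qint (Suc m) q = 1 + q * qint m q"
  unfolding qint_def by (subst sum.lessThan_Suc_shift) (simp add: sum_distrib_left)

lemma qint_1 [simp]: "qint (Suc 0) q = 1"
  by (simp add: qint_def)

text \<open>Words list the sites from the entry site \<open>n\<close> down to site 1, \<open>True\<close> meaning occupied.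
  The recursion is the expansion of \<open>N_set\<close> below along its topmost site; \<open>c\<close> counts the
  elements of the summation variable \<open>T\<close> lying above the sites still to be read.\<close>
fun word_weight :: "real \<Rightarrow> nat \<Rightarrow> bool list \<Rightarrow> real" where
  "word_weight q c [] = 1"
| "word_weight q c (False # w) = qint (Suc c) q * word_weight q c w"
| "word_weight q c (True # w) =
     (qint (Suc (Suc c)) q * word_weight q (Suc c) w - qint (Suc c) q * word_weight q c w) / q ^ Suc c"

lemma word_weight_swap:
  assumes "q \<noteq> 0"
  shows "word_weight q c (u @ True # False # v)
    = q * word_weight q c (u @ False # True # v) + word_weight q c (u @ True # v) + word_weight q c (u @ False # v)"
proof (induction u arbitrary: c)
  case Nil
  define a where "a = qint (Suc c) q"
  define b where "b = qint (Suc (Suc c)) q"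
  define Q where "Q = q ^ Suc c"
  define A where "A = word_weight q c v"
  define B where "B = word_weight q (Suc c) v"
  have "b = 1 + q * a" unfolding a_def b_def by (rule qint_Suc')
  moreover have "Q = b - a" unfolding a_def b_def Q_def by (simp add: qint_Suc[of "Suc c"])
  ultimately have numerator:
      "b * (b * B) - a * (a * A) = q * a * (b * B - a * A) + (b * B - a * A) + a * A * Q"
    by algebra
  have "Q \<noteq> 0" using assms unfolding Q_def by simp
  have "(b * (b * B) - a * (a * A)) / Q = q * (a * ((b * B - a * A) / Q)) + (b * B - a * A) / Q + a * A"
    unfolding numerator using \<open>Q \<noteq> 0\<close> by (simp add: add_divide_distrib)
  then show ?case
    by (simp only: append.simps word_weight.simps a_def[symmetric] b_def[symmetric] Q_def[symmetric]
        A_def[symmetric] B_def[symmetric])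
next
  case (Cons x u)
  then show ?case by (cases x) (simp_all add: algebra_simps diff_divide_distrib add_divide_distrib)
qed

lemma word_weight_snoc_True: "q \<noteq> 0 \<Longrightarrow> word_weight q c (w @ [True]) = word_weight q c w"
  by (induction w arbitrary: c rule: word_weight.induct) (simp_all add: qint_Suc)

lemma word_weight_bond:
  assumes "q \<noteq> 0"
  shows "(if \<not> a \<and> b then word_weight q 0 (u @ True # False # v) else 0)
   + (if a \<and> \<not> b then q * word_weight q 0 (u @ False # True # v) else 0)
   - word_weight q 0 (u @ a # b # v) * ((if a \<and> \<not> b then 1 else 0) + (if \<not> a \<and> b then q else 0))
   = (if a then -1 else 1) * word_weight q 0 (u @ b # v) - (if b then -1 else 1) * word_weight q 0 (u @ a # v)"
  using word_weight_swap[OF assms, of 0 u v] by (cases a; cases b) simp_all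

section \<open>Balance of the weights\<close>

lemma sum_mult_indicator:
  assumes "finite X" and "\<And>S. S \<in> X \<Longrightarrow> P S \<longleftrightarrow> S = e \<and> C" and "C \<Longrightarrow> e \<in> X"
  shows "(\<Sum>S\<in>X. w S * (if P S then r else 0)) = (if C then w e * r else (0::real))"
proof -
  have "(\<Sum>S\<in>X. w S * (if P S then r else 0)) = (\<Sum>S\<in>X. if S = e then (if C then w e * r else 0) else 0)"
    using assms(2) by (intro sum.cong) auto
  then show ?thesis using assms(1,3) by (simp add: sum.delta)
qed

lemma pasep_inflow:
  assumes "1 \<le> n" and "T \<in> pasep_states n"
  shows "(\<Sum>S\<in>pasep_states n - {T}. w S * pasep_rate n q S T) =
    (\<Sum>s\<in>{2..n}. (if s - 1 \<in> T \<and> s \<notin> T then w (insert s (T - {s - 1})) else 0)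
       + (if s \<in> T \<and> s - 1 \<notin> T then q * w (insert (s - 1) (T - {s})) else 0))
    + (if n \<in> T then w (T - {n}) else 0) + (if 1 \<notin> T then w (insert 1 T) else 0)"
proof -
  let ?X = "pasep_states n - {T}"
  have "finite ?X" by (simp add: pasep_states_def)
  have T: "T \<subseteq> {1..n}" using assms(2) by (simp add: pasep_states_def)
  have "(\<Sum>S\<in>?X. w S * pasep_rate n q S T) =
     (\<Sum>s\<in>{2..n}. (\<Sum>S\<in>?X. w S * (if s \<in> S \<and> s - 1 \<notin> S \<and> T = insert (s - 1) (S - {s}) then 1 else 0))
        + (\<Sum>S\<in>?X. w S * (if s - 1 \<in> S \<and> s \<notin> S \<and> T = insert s (S - {s - 1}) then q else 0)))
     + (\<Sum>S\<in>?X. w S * (if n \<notin> S \<and> T = insert n S then 1 else 0))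
     + (\<Sum>S\<in>?X. w S * (if 1 \<in> S \<and> T = S - {1} then 1 else 0))"
    unfolding pasep_rate_def by (simp add: distrib_left sum.distrib sum_distrib_left sum.swap[of _ ?X])
  also have "\<dots> =
    (\<Sum>s\<in>{2..n}. (if s - 1 \<in> T \<and> s \<notin> T then w (insert s (T - {s - 1})) * 1 else 0)
       + (if s \<in> T \<and> s - 1 \<notin> T then w (insert (s - 1) (T - {s})) * q else 0))
    + (if n \<in> T then w (T - {n}) * 1 else 0) + (if 1 \<notin> T then w (insert 1 T) * 1 else 0)"
    by (intro arg_cong2[where f = "(+)"] sum.cong refl sum_mult_indicator[OF \<open>finite ?X\<close>])
      (use T \<open>1 \<le> n\<close> in \<open>auto simp: pasep_states_def\<close>)
  finally show ?thesis by (simp add: mult.commute cong: if_cong)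
qed

lemma pasep_outflow:
  assumes "1 \<le> n" and "T \<in> pasep_states n"
  shows "(\<Sum>S\<in>pasep_states n - {T}. pasep_rate n q T S) =
    (\<Sum>s\<in>{2..n}. (if s \<in> T \<and> s - 1 \<notin> T then 1 else 0) + (if s - 1 \<in> T \<and> s \<notin> T then q else 0))
    + (if n \<notin> T then 1 else 0) + (if 1 \<in> T then 1 else 0)" (is "_ = ?rhs")
proof -
  let ?X = "pasep_states n - {T}"
  have "finite ?X" by (simp add: pasep_states_def)
  have T: "T \<subseteq> {1..n}" using assms(2) by (simp add: pasep_states_def)
  have "(\<Sum>S\<in>?X. pasep_rate n q T S) =
     (\<Sum>s\<in>{2..n}. (\<Sum>S\<in>?X. if s \<in> T \<and> s - 1 \<notin> T \<and> S = insert (s - 1) (T - {s}) then 1 else 0)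
        + (\<Sum>S\<in>?X. if s - 1 \<in> T \<and> s \<notin> T \<and> S = insert s (T - {s - 1}) then q else 0))
     + (\<Sum>S\<in>?X. if n \<notin> T \<and> S = insert n T then 1 else 0)
     + (\<Sum>S\<in>?X. if 1 \<in> T \<and> S = T - {1} then 1 else 0)"
    unfolding pasep_rate_def by (simp add: sum.distrib sum.swap[of _ ?X])
  also have "\<dots> = ?rhs"
    by (intro arg_cong2[where f = "(+)"] sum.cong refl)
      (use T \<open>1 \<le> n\<close> in \<open>auto simp: sum.If_cases pasep_states_def Int_def Collect_conv_if\<close>)
  finally show ?thesis .
qed

definition state_word :: "nat \<Rightarrow> nat set \<Rightarrow> bool list" where
  "state_word n S = map (\<lambda>x. x \<in> S) (rev [1..<Suc n])"

definition state_weight :: "real \<Rightarrow> nat \<Rightarrow> nat set \<Rightarrow> real" where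
  "state_weight q n S = word_weight q 0 (state_word n S)"

lemma state_weight_empty: "state_weight q n {} = 1"
proof -
  have "word_weight q 0 (replicate k False) = 1" for k by (induction k) simp_all
  moreover have "state_word n {} = replicate n False" by (simp add: state_word_def map_replicate_const)
  ultimately show ?thesis by (simp add: state_weight_def)
qed

text \<open>The net probability flow across the bond between sites \<open>s\<close> and \<open>s - 1\<close>, and through
  the two boundaries, is a difference of these terms, so global balance telescopes.\<close>
definition removal_term :: "real \<Rightarrow> nat \<Rightarrow> nat set \<Rightarrow> nat \<Rightarrow> real" where
  "removal_term q n S k =
     (if k \<in> S then -1 else 1) * word_weight q 0 (map (\<lambda>x. x \<in> S) (removeAll k (rev [1..<Suc n])))"

lemma rev_upt_split_bond:
  assumes "2 \<le> s" "s \<le> n"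
  shows "rev [1..<Suc n] = rev [Suc s..<Suc n] @ s # (s - 1) # rev [1..<s - 1]"
proof -
  have "[1..<Suc n] = [1..<s - 1] @ [s - 1..<Suc n]"
    using upt_add_eq_append[of 1 "s - 1" "Suc n - (s - 1)"] assms by simp
  also have "[s - 1..<Suc n] = (s - 1) # s # [Suc s..<Suc n]"
    using assms by (simp add: upt_conv_Cons)
  finally show ?thesis by simp
qed

lemma state_weight_bond:
  assumes "q \<noteq> 0" and "2 \<le> s" "s \<le> n"
  shows "(if s - 1 \<in> T \<and> s \<notin> T then state_weight q n (insert s (T - {s - 1})) else 0)
   + (if s \<in> T \<and> s - 1 \<notin> T then q * state_weight q n (insert (s - 1) (T - {s})) else 0)
   - state_weight q n T * ((if s \<in> T \<and> s - 1 \<notin> T then 1 else 0) + (if s - 1 \<in> T \<and> s \<notin> T then q else 0))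
   = removal_term q n T s - removal_term q n T (s - 1)"
proof -
  define U where "U = rev [Suc s..<Suc n]"
  define V where "V = rev [1..<s - 1]"
  have sites: "rev [1..<Suc n] = U @ s # (s - 1) # V"
    unfolding U_def V_def using rev_upt_split_bond[OF assms(2,3)] .
  have UV: "s \<notin> set U" "s - 1 \<notin> set U" "s \<notin> set V" "s - 1 \<notin> set V"
    using assms by (auto simp: U_def V_def)
  have word: "state_word n S = map (\<lambda>x. x \<in> T) U @ (s \<in> S) # (s - 1 \<in> S) # map (\<lambda>x. x \<in> T) V"
    if "S - {s, s - 1} = T - {s, s - 1}" for S
  proof -
    have "map (\<lambda>x. x \<in> S) W = map (\<lambda>x. x \<in> T) W" if "s \<notin> set W" "s - 1 \<notin> set W" for W
      using that \<open>S - {s, s - 1} = T - {s, s - 1}\<close> by (auto intro!: map_cong)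
    then show ?thesis unfolding state_word_def sites using UV by simp
  qed
  have "s - 1 \<noteq> s" using assms by simp
  let ?u = "map (\<lambda>x. x \<in> T) U" and ?v = "map (\<lambda>x. x \<in> T) V"
  have "state_word n (insert s (T - {s - 1})) = ?u @ True # False # ?v"
    using word[of "insert s (T - {s - 1})"] \<open>s - 1 \<noteq> s\<close> by auto
  moreover have "state_word n (insert (s - 1) (T - {s})) = ?u @ False # True # ?v"
    using word[of "insert (s - 1) (T - {s})"] \<open>s - 1 \<noteq> s\<close> by auto
  moreover have "removeAll s (rev [1..<Suc n]) = U @ (s - 1) # V"
    and "removeAll (s - 1) (rev [1..<Suc n]) = U @ s # V"
    unfolding sites using UV \<open>s - 1 \<noteq> s\<close> by simp_all
  ultimately show ?thesis
    using word_weight_bond[OF assms(1), of "s \<in> T" "s - 1 \<in> T" ?u ?v] word[of T]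
    unfolding removal_term_def state_weight_def by (cases "s \<in> T"; cases "s - 1 \<in> T") simp_all
qed

lemma state_weight_entry:
  assumes "1 \<le> n"
  shows "(if n \<in> T then state_weight q n (T - {n}) else 0) - state_weight q n T * (if n \<notin> T then 1 else 0)
    = - removal_term q n T n"
proof -
  have sites: "rev [1..<Suc n] = n # rev [1..<n]" using assms by simp
  have "map (\<lambda>x. x \<in> T - {n}) (rev [1..<n]) = map (\<lambda>x. x \<in> T) (rev [1..<n])"
    by (intro map_cong) auto
  then have "state_word n (T - {n}) = False # map (\<lambda>x. x \<in> T) (rev [1..<n])"
    unfolding state_word_def sites by simp
  moreover have "state_word n T = (n \<in> T) # map (\<lambda>x. x \<in> T) (rev [1..<n])"
    unfolding state_word_def sites by simp
  ultimately show ?thesis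
    unfolding removal_term_def state_weight_def sites by simp
qed

lemma state_weight_exit:
  assumes "1 \<le> n" and "q \<noteq> 0"
  shows "(if 1 \<notin> T then state_weight q n (insert 1 T) else 0) - state_weight q n T * (if 1 \<in> T then 1 else 0)
    = removal_term q n T 1"
proof -
  have sites: "rev [1..<Suc n] = rev [2..<Suc n] @ [1]"
    using assms(1) by (simp add: upt_conv_Cons eval_nat_numeral)
  have "map (\<lambda>x. x \<in> insert 1 T) (rev [2..<Suc n]) = map (\<lambda>x. x \<in> T) (rev [2..<Suc n])"
    by (intro map_cong) auto
  then have "state_word n (insert 1 T) = map (\<lambda>x. x \<in> T) (rev [2..<Suc n]) @ [True]"
    unfolding state_word_def sites by simp
  moreover have "state_word n T = map (\<lambda>x. x \<in> T) (rev [2..<Suc n]) @ [1 \<in> T]"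
    unfolding state_word_def sites by simp
  ultimately show ?thesis
    unfolding removal_term_def state_weight_def sites by (simp add: word_weight_snoc_True[OF assms(2)])
qed

lemma sum_telescope_from_2: "1 \<le> (n::nat) \<Longrightarrow> (\<Sum>s\<in>{2..n}. f s - f (s - 1)) = f n - (f 1 :: real)"
  by (induction n rule: dec_induct) simp_all

lemma state_weight_balanced:
  assumes "1 \<le> n" and "q \<noteq> 0"
  shows "global_balance (pasep_states n) (pasep_rate n q) (state_weight q n)"
  unfolding global_balance_def
proof
  fix T assume T: "T \<in> pasep_states n"
  let ?W = "state_weight q n" and ?y = "removal_term q n T"
  let ?bond = "\<lambda>s. (if s - 1 \<in> T \<and> s \<notin> T then ?W (insert s (T - {s - 1})) else 0)
   + (if s \<in> T \<and> s - 1 \<notin> T then q * ?W (insert (s - 1) (T - {s})) else 0)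
   - ?W T * ((if s \<in> T \<and> s - 1 \<notin> T then 1 else 0) + (if s - 1 \<in> T \<and> s \<notin> T then q else 0))"
  let ?entry = "(if n \<in> T then ?W (T - {n}) else 0) - ?W T * (if n \<notin> T then 1 else 0)"
  let ?exit = "(if 1 \<notin> T then ?W (insert 1 T) else 0) - ?W T * (if 1 \<in> T then 1 else 0)"
  have "(\<Sum>S\<in>pasep_states n - {T}. ?W S * pasep_rate n q S T)
       - ?W T * (\<Sum>S\<in>pasep_states n - {T}. pasep_rate n q T S)
     = (\<Sum>s\<in>{2..n}. ?bond s) + ?entry + ?exit"
    unfolding pasep_inflow[OF assms(1) T] pasep_outflow[OF assms(1) T]
    by (simp add: sum_distrib_left sum_subtractf sum.distrib algebra_simps)
  also have "(\<Sum>s\<in>{2..n}. ?bond s) = (\<Sum>s\<in>{2..n}. ?y s - ?y (s - 1))"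
    by (intro sum.cong refl state_weight_bond[OF assms(2)]) auto
  also have "\<dots> = ?y n - ?y 1" by (rule sum_telescope_from_2[OF assms(1)])
  also have "?entry = - ?y n" by (rule state_weight_entry[OF assms(1)])
  also have "?exit = ?y 1" by (rule state_weight_exit[OF assms])
  finally show "(\<Sum>S\<in>pasep_states n - {T}. ?W S * pasep_rate n q S T)
       = ?W T * (\<Sum>S\<in>pasep_states n - {T}. pasep_rate n q T S)" by simp
qed

section \<open>Compositions and descent sets\<close>

lemma compositions_Nil [simp]: "[] \<in> compositions m \<longleftrightarrow> m = 0"
  by (auto simp: compositions_def)

lemma compositions_Cons [simp]:
  "j # J \<in> compositions m \<longleftrightarrow> 0 < j \<and> j \<le> m \<and> J \<in> compositions (m - j)"
  by (auto simp: compositions_def)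

lemma compositions_0: "J \<in> compositions 0 \<longleftrightarrow> J = []"
  by (cases J) auto

lemma Des_Nil [simp]: "Des [] = {}"
  by (simp add: Des_def)

lemma Des_singleton [simp]: "Des [j] = {}"
  by (simp add: Des_def)

lemma Des_eq_image: "Des J = (\<lambda>k. sum_list (take k J)) ` {1..<length J}"
  unfolding Des_def by auto

lemma Des_Cons:
  assumes "J \<noteq> []"
  shows "Des (j # J) = insert j ((+) j ` Des J)"
proof -
  have range: "{1..<length (j # J)} = insert 1 (Suc ` {1..<length J})"
    using assms by (auto simp: image_Suc_atLeastLessThan)
  show ?thesis unfolding Des_eq_image range image_insert image_image by simp
qed

lemma Des_subset: "J \<in> compositions m \<Longrightarrow> Des J \<subseteq> {1..<m}"
proof (induction J arbitrary: m)
  case (Cons j J)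
  show ?case
  proof (cases "J = []")
    case False
    then have "0 < m - j" using Cons.prems compositions_0 by (cases "m - j") auto
    then show ?thesis using Cons Des_Cons[OF False] by fastforce
  qed simp
qed simp

lemma card_Des: "J \<in> compositions m \<Longrightarrow> card (Des J) = length J - 1"
proof (induction J arbitrary: m)
  case (Cons j J)
  show ?case
  proof (cases "J = []")
    case False
    have "finite (Des J)" "j \<notin> (+) j ` Des J"
      using Des_subset[of J "m - j"] Cons.prems finite_subset by fastforce+
    then show ?thesis
      using Cons.IH[of "m - j"] Cons.prems False by (simp add: Des_Cons card_image)
  qed simp
qed simp

lemma length_eq_Suc_card_Des: "J \<in> compositions m \<Longrightarrow> 0 < m \<Longrightarrow> length J = Suc (card (Des J))"
  using card_Des[of J m] by (cases J) auto

lemma Des_Cons_inverse: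
  assumes "J \<in> compositions m" and "J \<noteq> []"
  shows "Des J = (\<lambda>x. x - j) ` (Des (j # J) - {j})"
proof -
  have "j \<notin> (+) j ` Des J" using Des_subset[OF assms(1)] by auto
  then have "Des (j # J) - {j} = (+) j ` Des J" using Des_Cons[OF assms(2)] by auto
  then show ?thesis by (simp add: image_image)
qed

lemma Min_Des_Cons: "J \<in> compositions m \<Longrightarrow> J \<noteq> [] \<Longrightarrow> Min (Des (j # J)) = j"
  using Des_subset[of J m] finite_subset[OF Des_subset[of J m]]
  by (simp add: Des_Cons) (auto intro!: Min_eqI)

lemma inj_on_Des: "inj_on Des (compositions m)"
proof
  fix J1 J2 assume "J1 \<in> compositions m" "J2 \<in> compositions m" "Des J1 = Des J2"
  then show "J1 = J2"
  proof (induction J1 arbitrary: m J2)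
    case Nil
    then show ?case using compositions_0 by simp
  next
    case (Cons j J1)
    obtain j2 J2' where J2: "J2 = j2 # J2'"
      using Cons.prems(1,2) by (cases J2) auto
    have "J1 = [] \<longleftrightarrow> J2' = []"
      using Cons.prems(3) unfolding J2 by (metis Des_Cons Des_singleton insert_not_empty)
    show ?case
    proof (cases "J1 = []")
      case True
      then show ?thesis using Cons.prems \<open>J1 = [] \<longleftrightarrow> J2' = []\<close> unfolding J2 by simp
    next
      case False
      have "j = j2"
        using Min_Des_Cons[of J1 "m - j" j] Min_Des_Cons[of J2' "m - j2" j2] Cons.prems False
          \<open>J1 = [] \<longleftrightarrow> J2' = []\<close> unfolding J2 by simp
      moreover have "Des J1 = Des J2'"
        using Des_Cons_inverse[of J1 "m - j" j] Des_Cons_inverse[of J2' "m - j2" j2] Cons.prems False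
          \<open>J1 = [] \<longleftrightarrow> J2' = []\<close> \<open>j = j2\<close> unfolding J2 by simp
      ultimately show ?thesis using Cons.IH[of "m - j" J2'] Cons.prems unfolding J2 by simp
    qed
  qed
qed

lemma Des_surj: "1 \<le> m \<Longrightarrow> T \<subseteq> {1..<m} \<Longrightarrow> \<exists>J\<in>compositions m. Des J = T"
proof (induction m arbitrary: T rule: less_induct)
  case (less m)
  show ?case
  proof (cases "T = {}")
    case True
    then show ?thesis using less.prems by (intro bexI[of _ "[m]"]) auto
  next
    case False
    have "finite T" using less.prems(2) finite_subset by blast
    define j where "j = Min T"
    have "j \<in> T" and j_le: "\<And>x. x \<in> T \<Longrightarrow> j \<le> x"
      using \<open>finite T\<close> False unfolding j_def by auto
    then have "1 \<le> j" "j < m" using less.prems(2) by auto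
    define T' where "T' = (\<lambda>x. x - j) ` (T - {j})"
    have "T' \<subseteq> {1..<m - j}"
    proof
      fix y assume "y \<in> T'"
      then obtain x where "x \<in> T" "x \<noteq> j" "y = x - j" unfolding T'_def by auto
      moreover have "j \<le> x" "x < m" using j_le less.prems(2) \<open>x \<in> T\<close> by auto
      ultimately show "y \<in> {1..<m - j}" by auto
    qed
    moreover have "m - j < m" "1 \<le> m - j" using \<open>1 \<le> j\<close> \<open>j < m\<close> by auto
    ultimately obtain J' where J': "J' \<in> compositions (m - j)" "Des J' = T'"
      using less.IH by blast
    then have "J' \<noteq> []" using \<open>j < m\<close> by auto
    have "(+) j ` T' = (\<lambda>x. x) ` (T - {j})"
      unfolding T'_def image_image using j_le by (intro image_cong) auto
    then have "Des (j # J') = T"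
      using Des_Cons[OF \<open>J' \<noteq> []\<close>] J'(2) \<open>j \<in> T\<close> by auto
    moreover have "j # J' \<in> compositions m" using J'(1) \<open>1 \<le> j\<close> \<open>j < m\<close> by simp
    ultimately show ?thesis by blast
  qed
qed

lemma Des_image_coarser:
  assumes "1 \<le> m" and "D \<subseteq> {1..<m}"
  shows "Des ` {J \<in> compositions m. Des J \<subseteq> D} = Pow D"
proof
  show "Pow D \<subseteq> Des ` {J \<in> compositions m. Des J \<subseteq> D}"
  proof
    fix T assume "T \<in> Pow D"
    then obtain J where "J \<in> compositions m" "Des J = T"
      using Des_surj[OF assms(1), of T] assms(2) by auto
    then show "T \<in> Des ` {J \<in> compositions m. Des J \<subseteq> D}" using \<open>T \<in> Pow D\<close> by auto
  qed
qed auto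

lemma bij_betw_Des:
  assumes "1 \<le> m"
  shows "bij_betw Des (compositions m) (Pow {1..<m})"
proof -
  have "{J \<in> compositions m. Des J \<subseteq> {1..<m}} = compositions m" using Des_subset by auto
  then show ?thesis
    unfolding bij_betw_def using Des_image_coarser[OF assms order.refl] inj_on_Des by simp
qed

section \<open>The subset formula for \<open>N_I\<close>\<close>

definition st_set :: "nat set \<Rightarrow> nat set \<Rightarrow> nat" where
  "st_set S T = card {(a, b). a \<in> S \<and> b \<in> T \<and> a \<le> b}"

definition qfact_set :: "real \<Rightarrow> nat \<Rightarrow> nat \<Rightarrow> nat set \<Rightarrow> real" where
  "qfact_set q c m T = (\<Prod>i\<in>{1..m}. qint (Suc (c + card {t\<in>T. i \<le> t})) q)"

definition N_term :: "real \<Rightarrow> nat \<Rightarrow> nat \<Rightarrow> nat set \<Rightarrow> nat set \<Rightarrow> real" where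
  "N_term q c n S T =
     (- 1 / q) ^ (card S - card T) * inverse (q ^ (st_set S T + c * card S)) * qfact_set q c n T"

definition N_set :: "real \<Rightarrow> nat \<Rightarrow> nat \<Rightarrow> nat set \<Rightarrow> real" where
  "N_set q c n S = (\<Sum>T\<in>Pow S. N_term q c n S T)"

lemma qfact_set_Suc_out:
  assumes "T \<subseteq> {..n}"
  shows "qfact_set q c (Suc n) T = qfact_set q c n T * qint (Suc c) q"
proof -
  have "{t\<in>T. Suc n \<le> t} = {}" using assms by auto
  then show ?thesis unfolding qfact_set_def prod.cl_ivl_Suc by (simp only:) simp
qed

lemma qfact_set_Suc_in:
  assumes "T \<subseteq> {..n}"
  shows "qfact_set q c (Suc n) (insert (Suc n) T) = qfact_set q (Suc c) n T * qint (Suc (Suc c)) q"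
proof -
  have card: "card {t\<in>insert (Suc n) T. i \<le> t} = Suc (card {t\<in>T. i \<le> t})" if "i \<le> Suc n" for i
  proof -
    have "{t\<in>insert (Suc n) T. i \<le> t} = insert (Suc n) {t\<in>T. i \<le> t}" using that by auto
    moreover have "finite {t\<in>T. i \<le> t}" using finite_subset[OF assms finite_atMost] by simp
    moreover have "Suc n \<notin> {t\<in>T. i \<le> t}" using assms by auto
    ultimately show ?thesis by (metis card_insert_disjoint)
  qed
  have "qfact_set q c (Suc n) (insert (Suc n) T) = (\<Prod>i\<in>{1..Suc n}. qint (Suc (Suc c + card {t\<in>T. i \<le> t})) q)"
    unfolding qfact_set_def by (intro prod.cong refl) (subst card; simp)
  also have "\<dots> = qfact_set q (Suc c) n T * qint (Suc (Suc c)) q"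
    using qfact_set_Suc_out[OF assms, of q "Suc c"] unfolding qfact_set_def by simp
  finally show ?thesis .
qed

lemma st_set_insert_out:
  assumes "S \<subseteq> {..n}" and "T \<subseteq> S"
  shows "st_set (insert (Suc n) S) T = st_set S T"
proof -
  have "{(a, b). a \<in> insert (Suc n) S \<and> b \<in> T \<and> a \<le> b} = {(a, b). a \<in> S \<and> b \<in> T \<and> a \<le> b}"
    using assms by fastforce
  then show ?thesis unfolding st_set_def by simp
qed

lemma st_set_insert_in:
  assumes "S \<subseteq> {..n}" and "T \<subseteq> S"
  shows "st_set (insert (Suc n) S) (insert (Suc n) T) = st_set S T + Suc (card S)"
proof -
  define P where "P = {(a, b). a \<in> S \<and> b \<in> T \<and> a \<le> b}"
  define Q where "Q = insert (Suc n) S \<times> {Suc n}"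
  have "finite S" using finite_subset[OF assms(1) finite_atMost] .
  have "Suc n \<notin> S" using assms(1) by auto
  have split: "{(a, b). a \<in> insert (Suc n) S \<and> b \<in> insert (Suc n) T \<and> a \<le> b} = P \<union> Q"
    using assms unfolding P_def Q_def by fastforce
  have "finite P"
    by (rule finite_subset[of _ "S \<times> S"]) (use \<open>finite S\<close> assms(2) in \<open>auto simp: P_def\<close>)
  moreover have "finite Q" using \<open>finite S\<close> unfolding Q_def by simp
  moreover have "P \<inter> Q = {}" using \<open>Suc n \<notin> S\<close> assms(2) unfolding P_def Q_def by auto
  moreover have "card Q = Suc (card S)"
    using \<open>finite S\<close> \<open>Suc n \<notin> S\<close> unfolding Q_def by (simp add: card_cartesian_product)
  ultimately show ?thesis
    unfolding st_set_def split P_def[symmetric] by (simp add: card_Un_disjoint)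
qed

lemma N_set_Suc_out:
  assumes "S \<subseteq> {..n}"
  shows "N_set q c (Suc n) S = qint (Suc c) q * N_set q c n S"
  unfolding N_set_def sum_distrib_left
proof (intro sum.cong refl)
  fix T assume "T \<in> Pow S"
  then have "T \<subseteq> {..n}" using assms by auto
  then show "N_term q c (Suc n) S T = qint (Suc c) q * N_term q c n S T"
    by (simp add: N_term_def qfact_set_Suc_out)
qed

lemma N_term_insert_out:
  assumes "q \<noteq> 0" and "S \<subseteq> {..n}" and "T \<subseteq> S"
  shows "N_term q c (Suc n) (insert (Suc n) S) T = - qint (Suc c) q / q ^ Suc c * N_term q c n S T"
proof -
  have "finite S" using finite_subset[OF assms(2) finite_atMost] .
  moreover have "Suc n \<notin> S" using assms(2) by auto
  moreover have "card T \<le> card S" using \<open>finite S\<close> assms(3) by (simp add: card_mono)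
  moreover have "T \<subseteq> {..n}" using assms(2,3) by auto
  ultimately show ?thesis using assms
    by (simp add: N_term_def Suc_diff_le qfact_set_Suc_out st_set_insert_out power_add field_simps)
qed

lemma N_term_insert_in:
  assumes "q \<noteq> 0" and "S \<subseteq> {..n}" and "T \<subseteq> S"
  shows "N_term q c (Suc n) (insert (Suc n) S) (insert (Suc n) T)
    = qint (Suc (Suc c)) q / q ^ Suc c * N_term q (Suc c) n S T"
proof -
  have "finite S" using finite_subset[OF assms(2) finite_atMost] .
  moreover have "Suc n \<notin> S" using assms(2) by auto
  moreover have "finite T" "Suc n \<notin> T" using \<open>finite S\<close> \<open>Suc n \<notin> S\<close> assms(3) finite_subset by auto
  moreover have "T \<subseteq> {..n}" using assms(2,3) by auto
  ultimately show ?thesis using assms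
    by (simp add: N_term_def qfact_set_Suc_in st_set_insert_in power_add field_simps)
qed

lemma N_set_Suc_in:
  assumes "q \<noteq> 0" and S: "S \<subseteq> {..n}"
  shows "N_set q c (Suc n) (insert (Suc n) S)
    = (qint (Suc (Suc c)) q * N_set q (Suc c) n S - qint (Suc c) q * N_set q c n S) / q ^ Suc c"
proof -
  let ?g = "N_term q c (Suc n) (insert (Suc n) S)"
  have "finite S" using finite_subset[OF S finite_atMost] .
  have "Suc n \<notin> S" using S by auto
  have "N_set q c (Suc n) (insert (Suc n) S) = (\<Sum>T\<in>Pow S. ?g T) + (\<Sum>T\<in>insert (Suc n) ` Pow S. ?g T)"
    unfolding N_set_def Pow_insert
    by (rule sum.union_disjoint) (use \<open>finite S\<close> \<open>Suc n \<notin> S\<close> in auto)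
  also have "(\<Sum>T\<in>insert (Suc n) ` Pow S. ?g T) = (\<Sum>T\<in>Pow S. ?g (insert (Suc n) T))"
  proof (rule sum.reindex_cong)
    show "inj_on (insert (Suc n)) (Pow S)"
      using \<open>Suc n \<notin> S\<close> unfolding inj_on_def by (metis PowD insert_ident subsetD)
  qed simp_all
  also have "(\<Sum>T\<in>Pow S. ?g T) = - qint (Suc c) q / q ^ Suc c * N_set q c n S"
    unfolding N_set_def sum_distrib_left using S by (intro sum.cong refl N_term_insert_out[OF assms(1)]) auto
  also have "(\<Sum>T\<in>Pow S. ?g (insert (Suc n) T)) = qint (Suc (Suc c)) q / q ^ Suc c * N_set q (Suc c) n S"
    unfolding N_set_def sum_distrib_left using S by (intro sum.cong refl N_term_insert_in[OF assms(1)]) auto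
  finally show ?thesis using assms(1) by (simp add: field_simps)
qed

lemma state_word_Suc: "state_word (Suc n) S = (Suc n \<in> S) # state_word n S"
  by (simp add: state_word_def)

lemma state_word_insert_above: "state_word n (insert (Suc n) S) = state_word n S"
  unfolding state_word_def by (intro map_cong) auto

lemma N_set_eq_word_weight:
  assumes "q \<noteq> 0"
  shows "S \<subseteq> {1..n} \<Longrightarrow> N_set q c n S = word_weight q c (state_word n S)"
proof (induction n arbitrary: c S)
  case 0
  then show ?case by (simp add: N_set_def N_term_def st_set_def qfact_set_def state_word_def)
next
  case (Suc n)
  show ?case
  proof (cases "Suc n \<in> S")
    case False
    then have "S \<subseteq> {1..n}" using Suc.prems by (auto simp: le_Suc_eq)
    moreover have "S \<subseteq> {..n}" using \<open>S \<subseteq> {1..n}\<close> by auto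
    ultimately show ?thesis
      using Suc.IH False by (simp add: N_set_Suc_out state_word_Suc)
  next
    case True
    define S' where "S' = S - {Suc n}"
    have "S' \<subseteq> {1..n}" using Suc.prems unfolding S'_def by (auto simp: le_Suc_eq)
    moreover have "S' \<subseteq> {..n}" using \<open>S' \<subseteq> {1..n}\<close> by auto
    moreover have "S = insert (Suc n) S'" using True unfolding S'_def by auto
    ultimately show ?thesis
      using Suc.IH \<open>q \<noteq> 0\<close>
      by (simp add: N_set_Suc_in state_word_Suc state_word_insert_above)
  qed
qed

lemma QFactA_Cons: "QFactA q (j # J) = qint (Suc (length J)) q ^ j * QFactA q J"
  unfolding QFactA_def length_Cons prod.lessThan_Suc_shift by simp

lemma qfact_set_shift:
  assumes "finite D" and "0 \<notin> D"
  shows "qfact_set q c (j + m) (insert j ((+) j ` D)) = qint (Suc (c + Suc (card D))) q ^ j * qfact_set q c m D"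
proof -
  let ?T = "insert j ((+) j ` D)"
  let ?f = "\<lambda>i. qint (Suc (c + card {t\<in>?T. i \<le> t})) q"
  have "card ?T = Suc (card D)" using assms by (simp add: card_image image_iff)
  have "{1..j + m} = {1..j} \<union> {1 + j..m + j}" by auto
  then have "qfact_set q c (j + m) ?T = prod ?f {1..j} * prod ?f {1 + j..m + j}"
    unfolding qfact_set_def by (simp add: prod.union_disjoint)
  also have "prod ?f {1..j} = qint (Suc (c + Suc (card D))) q ^ j"
  proof -
    have "{t\<in>?T. i \<le> t} = ?T" if "i \<in> {1..j}" for i using that by auto
    then show ?thesis using \<open>card ?T = Suc (card D)\<close> by simp
  qed
  also have "prod ?f {1 + j..m + j} = qfact_set q c m D"
    unfolding prod.shift_bounds_cl_nat_ivl qfact_set_def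
  proof (intro prod.cong refl)
    fix i assume "i \<in> {1..m}"
    then have "{t\<in>?T. i + j \<le> t} = (+) j ` {t\<in>D. i \<le> t}" by auto
    then show "?f (i + j) = qint (Suc (c + card {t\<in>D. i \<le> t})) q" by (simp add: card_image)
  qed
  finally show ?thesis by simp
qed

lemma QFactA_eq_qfact_set: "J \<in> compositions m \<Longrightarrow> QFactA q J = qfact_set q 0 m (Des J)"
proof (induction J arbitrary: m)
  case Nil
  then show ?case by (simp add: QFactA_def qfact_set_def)
next
  case (Cons j J)
  show ?case
  proof (cases "J = []")
    case True
    then show ?thesis using Cons.prems by (simp add: QFactA_def qfact_set_def)
  next
    case False
    have J: "J \<in> compositions (m - j)" and "j \<le> m" using Cons.prems by auto
    have "finite (Des J)" "0 \<notin> Des J" using Des_subset[OF J] finite_subset by auto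
    moreover have "Suc (card (Des J)) = length J" using card_Des[OF J] False by (cases J) auto
    moreover have "m = j + (m - j)" using \<open>j \<le> m\<close> by simp
    ultimately have "qfact_set q 0 m (Des (j # J)) = qint (Suc (length J)) q ^ j * qfact_set q 0 (m - j) (Des J)"
      unfolding Des_Cons[OF False] by (metis qfact_set_shift add_0)
    then show ?thesis using Cons.IH[OF J] by (simp add: QFactA_Cons)
  qed
qed

lemma N_I_summand_eq_N_term:
  assumes I: "I \<in> compositions (n + 1)" and J: "J \<in> compositions (n + 1)"
  shows "(- 1 / q) ^ (length I - length J) * inverse (q ^ st' I J) * QFactA q J
    = N_term q 0 n (Des I) (Des J)"
proof -
  have "Des J \<subseteq> {..n}" using Des_subset[OF J] by auto
  then have "QFactA q J = qfact_set q 0 n (Des J)"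
    using QFactA_eq_qfact_set[OF J] qfact_set_Suc_out[of "Des J" n q 0] by simp
  moreover have "length I - length J = card (Des I) - card (Des J)"
    using length_eq_Suc_card_Des[OF I] length_eq_Suc_card_Des[OF J] by simp
  ultimately show ?thesis unfolding N_term_def st'_def st_set_def[symmetric] by simp
qed

lemma N_I_eq_N_set:
  assumes I: "I \<in> compositions (n + 1)"
  shows "N_I q (n + 1) I = N_set q 0 n (Des I)"
proof -
  let ?A = "{J \<in> compositions (n + 1). Des J \<subseteq> Des I}"
  have "inj_on Des ?A" using inj_on_Des by (rule inj_on_subset) auto
  have "N_I q (n + 1) I = (\<Sum>J\<in>?A. N_term q 0 n (Des I) (Des J))"
    unfolding N_I_def using I by (intro sum.cong refl N_I_summand_eq_N_term) auto
  also have "\<dots> = (\<Sum>T\<in>Des ` ?A. N_term q 0 n (Des I) T)"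
    using \<open>inj_on Des ?A\<close> by (simp add: sum.reindex)
  also have "Des ` ?A = Pow (Des I)"
    using Des_subset[OF I] by (intro Des_image_coarser) auto
  finally show ?thesis unfolding N_set_def .
qed

lemma N_I_eq_state_weight:
  assumes "q \<noteq> 0" and I: "I \<in> compositions (n + 1)"
  shows "N_I q (n + 1) I = state_weight q n (Des I)"
  unfolding N_I_eq_N_set[OF I] state_weight_def using N_set_eq_word_weight[OF assms(1)] Des_subset[OF I]
  by (simp add: atLeastLessThanSuc_atLeastAtMost)

lemma Z_n_eq_sum_state_weight:
  assumes "q \<noteq> 0"
  shows "Z_n q n = (\<Sum>S\<in>pasep_states n. state_weight q n S)"
proof -
  have "Z_n q n = (\<Sum>I\<in>compositions (n + 1). state_weight q n (Des I))"
    unfolding Z_n_def using N_I_eq_state_weight[OF assms] by simp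
  also have "\<dots> = (\<Sum>S\<in>Pow {1..<n + 1}. state_weight q n S)"
    using bij_betw_Des[of "n + 1"] by (simp add: sum.reindex_bij_betw)
  finally show ?thesis by (simp add: pasep_states_def atLeastLessThanSuc_atLeastAtMost)
qed

theorem mainTheorem3:
  fixes n :: nat and q :: real and I :: "nat list" and \<pi> :: "nat set \<Rightarrow> real"
  assumes "1 \<le> n" and "0 < q"
    and "I \<in> compositions (n + 1)"
    and "pasep_stationary n q \<pi>"
  shows "\<pi> (Des I) = N_I q (n + 1) I / Z_n q n"
proof -
  let ?W = "state_weight q n" and ?X = "pasep_states n"
  have "q \<noteq> 0" "0 \<le> q" using \<open>0 < q\<close> by simp_all
  have "finite ?X" by (simp add: pasep_states_def)
  have \<pi>: "global_balance ?X (pasep_rate n q) \<pi>" "\<forall>S\<in>?X. 0 \<le> \<pi> S" "(\<Sum>S\<in>?X. \<pi> S) = 1"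
    using assms(4) unfolding pasep_stationary_def global_balance_def by auto
  have W: "?W S = (\<Sum>S\<in>?X. ?W S) * \<pi> S" if "S \<in> ?X" for S
    by (rule global_balance_eq_total_mult[OF \<open>finite ?X\<close> pasep_irreducible[OF \<open>0 \<le> q\<close>] _
        \<pi> state_weight_balanced[OF assms(1) \<open>q \<noteq> 0\<close>] that])
      (rule pasep_rate_nonneg[OF \<open>0 \<le> q\<close>])
  have "{} \<in> ?X" by (simp add: pasep_states_def)
  then have "(\<Sum>S\<in>?X. ?W S) \<noteq> 0" using W[of "{}"] state_weight_empty by auto
  moreover have "Des I \<in> ?X"
    using Des_subset[OF assms(3)] by (auto simp: pasep_states_def)
  ultimately show ?thesis
    using W[of "Des I"] unfolding N_I_eq_state_weight[OF \<open>q \<noteq> 0\<close> assms(3)]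
      Z_n_eq_sum_state_weight[OF \<open>q \<noteq> 0\<close>] by (simp add: field_simps)
qed

end
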